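(* Write $\hat B_n(x)=\sum_{k=0}^n\hat B(n,k)x^k$ and set $\hat B(n,k)=0$ for $k<0$ or $k>n$. Then $\hat B(n,0)=S_n$ for $n\ge1$, and for all $n\ge1$ and all integers $k$, $$\hat B(n+1,k)=(n+1-k)\big(\hat B(n,k)+\hat B(n,k-2)\big)+k\big(\hat B(n,k+1)+\hat B(n,k-1)\big)+\hat B(n,k+1)+\hat B(n,k-2).$$
   Context: $\mathcal B_n$ is the set of signed permutations (bijections $\sigma$ of $\{\pm1,\dots,\pm n\}$ with $\sigma(-i)=-\sigma(i)$), written as words $\sigma(1)\cdots\sigma(n)$ with $\sigma(0)=0$. An index $i\in\{0\}\cup[n-1]$ is an alternating descent of $\sigma$ if either $\sigma(i)<\sigma(i+1)$ and $i$ is even, or $\sigma(i)>\sigma(i+1)$ and $i$ is odd; $\hat B_n(x)=\sum_{\sigma\in\mathcal B_n}x^{\hat d_B(\sigma)}$ with $\hat d_B(\sigma)$ the number of alternating descents. $S_n$ is the number of snakes: $\tau\in\mathcal B_n$ with $\tau(1)>\tau(2)<\tau(3)>\cdots$ and $\tau(1)>0$; its exponential generating function is $1+\sum_{n>0}S_nx^n/n!=1/(\cos x-\sin x)$. *)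

theory Defs
  imports Main
begin

text \<open>Signed permutations of [n], represented as functions on int that are
  bijections of {-n..n}-{0}, odd (sigma(-i) = -sigma(i), hence sigma(0)=0),
  and the identity outside {-n..n}.\<close>
definition signed_perms :: "nat \<Rightarrow> (int \<Rightarrow> int) set" where
  "signed_perms n = {\<sigma>. bij_betw \<sigma> ({- int n..int n} - {0}) ({- int n..int n} - {0})
      \<and> (\<forall>i. \<sigma> (- i) = - \<sigma> i)
      \<and> (\<forall>i. i \<notin> {- int n..int n} \<longrightarrow> \<sigma> i = i)}"

definition is_alt_des :: "(int \<Rightarrow> int) \<Rightarrow> nat \<Rightarrow> bool" where
  "is_alt_des \<sigma> i \<longleftrightarrow> (even i \<and> \<sigma> (int i) < \<sigma> (int i + 1)) \<or> (odd i \<and> \<sigma> (int i) > \<sigma> (int i + 1))"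

definition alt_des_B :: "nat \<Rightarrow> (int \<Rightarrow> int) \<Rightarrow> nat" where
  "alt_des_B n \<sigma> = card {i \<in> {0..<n}. is_alt_des \<sigma> i}"

text \<open>Coefficient of x^k in hat B_n(x); automatically 0 for k<0 or k>n.\<close>
definition Bhat :: "nat \<Rightarrow> int \<Rightarrow> int" where
  "Bhat n k = int (card {\<sigma> \<in> signed_perms n. int (alt_des_B n \<sigma>) = k})"

definition snakes :: "nat \<Rightarrow> (int \<Rightarrow> int) set" where
  "snakes n = {\<tau> \<in> signed_perms n. \<tau> 1 > 0 \<and>
      (\<forall>i. 1 \<le> i \<and> i < n \<longrightarrow>
         (odd i \<longrightarrow> \<tau> (int i) > \<tau> (int i + 1)) \<and> (even i \<longrightarrow> \<tau> (int i) < \<tau> (int i + 1)))}"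

definition S_num :: "nat \<Rightarrow> int" where
  "S_num n = int (card (snakes n))"

end

theory Submission
  imports Defs
begin

text \<open>Put \<open>z\<^sub>i = (-1)\<^sup>i \<sigma>(i)\<close>. Then \<open>|z\<^sub>1| \<dots> |z\<^sub>n|\<close> is a permutation of \<open>[n]\<close>, this encoding of
  signed permutations is bijective, and, with \<open>z\<^sub>0 = \<sigma>(0) = 0\<close>, \<open>i\<close> is an alternating descent of \<open>\<sigma>\<close>
  iff \<open>z\<^sub>i + z\<^sub>i\<^sub>+\<^sub>1 < 0\<close>. A word of length \<open>n + 1\<close> arises uniquely by inserting \<open>\<plusminus>(n + 1)\<close> into
  a word of length \<open>n\<close>. Since the new letter dominates all others in absolute value, inserting it
  into the gap between \<open>z\<^sub>p\<close> and \<open>z\<^sub>p\<^sub>+\<^sub>1\<close> removes the contribution of that pair and creates two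
  pairs that are negative iff the letter is, while appending it creates one such pair. Counting
  the \<open>2(n + 1)\<close> insertions according to the resulting statistic gives the recurrence.
  For \<open>k = 0\<close>, negating \<open>\<sigma>\<close> maps the permutations without alternating descents onto the snakes.\<close>

definition insert_at :: "nat \<Rightarrow> 'a \<Rightarrow> 'a list \<Rightarrow> 'a list" where
  "insert_at p x xs = take p xs @ x # drop p xs"

lemma length_insert_at [simp]: "length (insert_at p x xs) = Suc (length xs)"
  by (simp add: insert_at_def)

lemma map_insert_at: "map f (insert_at p x xs) = insert_at p (f x) (map f xs)"
  by (simp add: insert_at_def take_map drop_map)

lemma set_insert_at [simp]: "set (insert_at p x xs) = insert x (set xs)"
proof -
  obtain A B where "take p xs = A" "drop p xs = B" "xs = A @ B"
    by (metis append_take_drop_id)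
  then show ?thesis by (auto simp: insert_at_def)
qed

lemma distinct_insert_at [simp]: "distinct (insert_at p x xs) \<longleftrightarrow> x \<notin> set xs \<and> distinct xs"
proof -
  obtain A B where "take p xs = A" "drop p xs = B" "xs = A @ B"
    by (metis append_take_drop_id)
  then show ?thesis by (auto simp: insert_at_def)
qed

lemma nth_insert_at_same: "p \<le> length xs \<Longrightarrow> insert_at p x xs ! p = x"
  by (simp add: insert_at_def nth_append)

lemma remove_insert_at:
  "p \<le> length xs \<Longrightarrow> take p (insert_at p x xs) @ drop (Suc p) (insert_at p x xs) = xs"
  by (simp add: insert_at_def)

lemma insert_at_remove: "p < length ys \<Longrightarrow> insert_at p (ys!p) (take p ys @ drop (Suc p) ys) = ys"
  by (simp add: insert_at_def id_take_nth_drop[symmetric] min_def)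

section \<open>Negative adjacent sums\<close>

fun neg_pairs :: "'a::linordered_idom list \<Rightarrow> nat" where
  "neg_pairs (a # b # r) = of_bool (a + b < 0) + neg_pairs (b # r)"
| "neg_pairs _ = 0"

lemma neg_pairs_append_Cons:
  "neg_pairs (xs @ y # ys)
    = neg_pairs xs + (if xs = [] then 0 else of_bool (last xs + y < 0)) + neg_pairs (y # ys)"
  by (induction xs rule: neg_pairs.induct) auto

lemma neg_pairs_eq_sum: "neg_pairs ys = (\<Sum>i<length ys - 1. of_bool (ys!i + ys!Suc i < 0))"
  by (induction ys rule: neg_pairs.induct) (simp_all add: sum.lessThan_Suc_shift del: sum.lessThan_Suc)

lemma add_neg_iff_dominant:
  fixes x y :: "'a::linordered_idom"
  shows "\<bar>y\<bar> < \<bar>x\<bar> \<Longrightarrow> y + x < 0 \<longleftrightarrow> x < 0"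
  by (auto simp: abs_less_iff abs_if split: if_splits)

lemma neg_pairs_insert_at_dominant:
  fixes x :: "'a::linordered_idom"
  assumes "0 < q" "q < length ys" "\<forall>y\<in>set ys. \<bar>y\<bar> < \<bar>x\<bar>"
  shows "neg_pairs (insert_at q x ys) + of_bool (ys!(q-1) + ys!q < 0)
    = neg_pairs ys + 2 * of_bool (x < 0)"
proof -
  define A y B where "A = take q ys" and "y = ys!q" and "B = drop (Suc q) ys"
  have ys: "ys = A @ y # B"
    using assms(2) by (simp add: A_def y_def B_def id_take_nth_drop)
  obtain q' where "q = Suc q'"
    using assms(1) gr0_implies_Suc by blast
  then have A: "A \<noteq> []" "ys!(q-1) = last A"
    using assms(2) by (auto simp: A_def take_Suc_conv_app_nth)
  have "y \<in> set ys" "last A \<in> set ys"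
    using assms A(2)[symmetric] by (auto simp: y_def)
  then have sign: "last A + x < 0 \<longleftrightarrow> x < 0" "x + y < 0 \<longleftrightarrow> x < 0"
    using assms(3) add_neg_iff_dominant[of y x] add_neg_iff_dominant[of "last A" x]
    by (auto simp: add.commute)
  have "insert_at q x ys = A @ x # y # B"
    using assms(2) by (simp add: A_def y_def B_def insert_at_def Cons_nth_drop_Suc)
  then have "neg_pairs (insert_at q x ys)
      = neg_pairs A + of_bool (last A + x < 0) + of_bool (x + y < 0) + neg_pairs (y # B)"
    using A(1) by (simp add: neg_pairs_append_Cons)
  moreover have "neg_pairs ys = neg_pairs A + of_bool (last A + y < 0) + neg_pairs (y # B)"
    using A(1) by (subst ys) (simp add: neg_pairs_append_Cons)
  ultimately show ?thesis
    using A(2) by (simp add: sign y_def[symmetric])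
qed

lemma neg_pairs_snoc_dominant:
  fixes x :: "'a::linordered_idom"
  assumes "ys \<noteq> []" "\<forall>y\<in>set ys. \<bar>y\<bar> < \<bar>x\<bar>"
  shows "neg_pairs (ys @ [x]) = neg_pairs ys + of_bool (x < 0)"
proof -
  have "last ys \<in> set ys" using assms by simp
  then have "(last ys + x < 0) = (x < 0)" using assms add_neg_iff_dominant by blast
  then show ?thesis using assms by (simp add: neg_pairs_append_Cons)
qed

section \<open>Signed lists and insertion of the largest letter\<close>

definition signed_lists :: "nat \<Rightarrow> int list set" where
  "signed_lists n = {zs. length zs = n \<and> distinct (map abs zs) \<and> set (map abs zs) = {1..int n}}"

lemma signed_lists_abs_bounds:
  "zs \<in> signed_lists n \<Longrightarrow> y \<in> set zs \<Longrightarrow> 1 \<le> \<bar>y\<bar> \<and> \<bar>y\<bar> \<le> int n"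
proof -
  assume "zs \<in> signed_lists n" "y \<in> set zs"
  then have "\<bar>y\<bar> \<in> set (map abs zs)" "set (map abs zs) = {1..int n}"
    by (auto simp: signed_lists_def)
  then show ?thesis by simp
qed

lemma finite_signed_lists: "finite (signed_lists n)"
proof (rule finite_subset)
  show "signed_lists n \<subseteq> {xs. set xs \<subseteq> {-int n..int n} \<and> length xs = n}"
    using signed_lists_abs_bounds by (fastforce simp: signed_lists_def abs_le_iff)
qed (simp add: finite_lists_length_eq)

lemma insert_at_in_signed_lists:
  assumes "zs \<in> signed_lists n" "\<bar>x\<bar> = int n + 1"
  shows "insert_at p x zs \<in> signed_lists (Suc n)"
  using assms by (auto simp: signed_lists_def map_insert_at)

lemma signed_lists_Suc_cases:
  assumes "ys \<in> signed_lists (Suc n)"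
  obtains zs p s where "zs \<in> signed_lists n" "p \<le> n" "s \<in> {1, -1}" "ys = insert_at p (s * (int n + 1)) zs"
proof -
  have l: "length ys = Suc n" and d: "distinct (map abs ys)" and st: "set (map abs ys) = {1..int n + 1}"
    using assms by (auto simp: signed_lists_def)
  have "int n + 1 \<in> set (map abs ys)"
    using st by simp
  then obtain p where p: "p \<le> n" "\<bar>ys!p\<bar> = int n + 1"
    using l by (auto simp: in_set_conv_nth less_Suc_eq_le)
  define zs where "zs = take p ys @ drop (Suc p) ys"
  have ys: "ys = insert_at p (ys!p) zs"
    using p l by (simp add: zs_def insert_at_remove)
  then have "map abs ys = insert_at p (int n + 1) (map abs zs)"
    using p(2) map_insert_at[of abs p "ys!p" zs] by simp
  then have "distinct (map abs zs)" "int n + 1 \<notin> set (map abs zs)"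
    "insert (int n + 1) (set (map abs zs)) = {1..int n + 1}"
    using d st by auto
  then have "set (map abs zs) = {1..int n + 1} - {int n + 1}"
    by blast
  also have "\<dots> = {1..int n}"
    by auto
  moreover have "length zs = n"
    using l p by (simp add: zs_def)
  ultimately have "zs \<in> signed_lists n"
    using \<open>distinct (map abs zs)\<close> by (simp add: signed_lists_def)
  moreover have "ys!p = sgn (ys!p) * (int n + 1)"
    using p(2) sgn_mult_abs[of "ys!p"] by simp
  moreover have "sgn (ys!p) \<in> {1, -1}"
    using p(2) by (auto simp: sgn_if)
  ultimately show thesis
    using that p(1) ys by metis
qed

lemma insert_top_inj:
  assumes "zs \<in> signed_lists n" "zs' \<in> signed_lists n" "p \<le> n" "p' \<le> n"
    and "\<bar>s\<bar> = 1" "\<bar>s'\<bar> = 1"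
    and eq: "insert_at p (s * (int n + 1)) zs = insert_at p' (s' * (int n + 1)) zs'"
  shows "zs = zs' \<and> p = p' \<and> s = s'"
proof -
  define ys where "ys = insert_at p (s * (int n + 1)) zs"
  have l: "length zs = n" "length zs' = n"
    using assms(1,2) by (auto simp: signed_lists_def)
  have "ys \<in> signed_lists (Suc n)"
    using insert_at_in_signed_lists[OF assms(1)] assms(5) by (simp add: ys_def abs_mult)
  then have d: "distinct (map abs ys)" "length ys = Suc n"
    by (auto simp: signed_lists_def)
  have yp: "ys!p = s * (int n + 1)" "ys!p' = s' * (int n + 1)"
    using l assms(3,4) by (simp add: ys_def nth_insert_at_same, simp add: ys_def eq nth_insert_at_same)
  then have "map abs ys ! p = map abs ys ! p'"
    using d(2) assms(3-6) by (simp add: abs_mult)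
  then have p: "p = p'"
    using nth_eq_iff_index_eq[OF d(1)] d(2) assms(3,4) by simp
  then have "s = s'"
    using yp by simp
  moreover have "zs = take p ys @ drop (Suc p) ys" "zs' = take p' ys @ drop (Suc p') ys"
    using l assms(3,4) by (simp add: ys_def remove_insert_at, simp add: ys_def eq remove_insert_at)
  ultimately show ?thesis
    using p by simp
qed

lemma bij_betw_insert_top:
  "bij_betw (\<lambda>(zs, p, s). insert_at p (s * (int n + 1)) zs)
     (signed_lists n \<times> {..n} \<times> {1, -1}) (signed_lists (Suc n))"
proof (rule bij_betw_imageI)
  show "inj_on (\<lambda>(zs, p, s). insert_at p (s * (int n + 1)) zs) (signed_lists n \<times> {..n} \<times> {1, -1})"
  proof (rule inj_onI)
    fix d d' assume "d \<in> signed_lists n \<times> {..n} \<times> {1, -1}" "d' \<in> signed_lists n \<times> {..n} \<times> {1, -1}"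
      "(\<lambda>(zs, p, s). insert_at p (s * (int n + 1)) zs) d = (\<lambda>(zs, p, s). insert_at p (s * (int n + 1)) zs) d'"
    moreover obtain zs p s zs' p' s' where "d = (zs, p, s)" "d' = (zs', p', s')"
      by (cases d, cases d') auto
    ultimately show "d = d'"
      using insert_top_inj[of zs n zs' p p' s s'] by auto
  qed
  show "(\<lambda>(zs, p, s). insert_at p (s * (int n + 1)) zs) ` (signed_lists n \<times> {..n} \<times> {1, -1})
      = signed_lists (Suc n)"
  proof
    show "signed_lists (Suc n) \<subseteq> (\<lambda>(zs, p, s). insert_at p (s * (int n + 1)) zs) ` (signed_lists n \<times> {..n} \<times> {1, -1})"
    proof
      fix ys assume "ys \<in> signed_lists (Suc n)"
      then obtain zs p s where "zs \<in> signed_lists n" "p \<le> n" "s \<in> {1, -1}"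
        "ys = insert_at p (s * (int n + 1)) zs"
        by (rule signed_lists_Suc_cases)
      then show "ys \<in> (\<lambda>(zs, p, s). insert_at p (s * (int n + 1)) zs) ` (signed_lists n \<times> {..n} \<times> {1, -1})"
        by (intro rev_image_eqI[of "(zs, p, s)"]) auto
    qed
  qed (auto intro!: insert_at_in_signed_lists)
qed

text \<open>The leading \<open>0\<close> plays the role of \<open>\<sigma>(0)\<close>.\<close>

definition alt_des_list :: "int list \<Rightarrow> nat" where
  "alt_des_list zs = neg_pairs (0 # zs)"

lemma alt_des_list_eq_sum: "alt_des_list zs = (\<Sum>p<length zs. of_bool ((0 # zs)!p + zs!p < 0))"
  by (simp add: alt_des_list_def neg_pairs_eq_sum)

lemma alt_des_list_insert_at_dominant:
  assumes "p < length zs" "\<forall>y\<in>set zs. \<bar>y\<bar> < \<bar>x\<bar>"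
  shows "alt_des_list (insert_at p x zs) + of_bool ((0 # zs)!p + zs!p < 0)
    = alt_des_list zs + 2 * of_bool (x < 0)"
proof -
  have "0 # insert_at p x zs = insert_at (Suc p) x (0 # zs)"
    by (simp add: insert_at_def)
  moreover have "\<forall>y\<in>set (0 # zs). \<bar>y\<bar> < \<bar>x\<bar>"
    using assms by (cases zs) auto
  ultimately show ?thesis
    using neg_pairs_insert_at_dominant[of "Suc p" "0 # zs" x] assms(1)
    by (simp add: alt_des_list_def)
qed

lemma alt_des_list_append_dominant:
  assumes "x \<noteq> 0" "\<forall>y\<in>set zs. \<bar>y\<bar> < \<bar>x\<bar>"
  shows "alt_des_list (insert_at (length zs) x zs) = alt_des_list zs + of_bool (x < 0)"
proof -
  have "\<forall>y\<in>set (0 # zs). \<bar>y\<bar> < \<bar>x\<bar>"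
    using assms by (cases zs) auto
  then show ?thesis
    using neg_pairs_snoc_dominant[of "0 # zs" x] by (simp add: alt_des_list_def insert_at_def)
qed

text \<open>Among the \<open>2(n + 1)\<close> insertions into a list with statistic \<open>j\<close>, \<open>n + 1 - j\<close> keep \<open>j\<close>,
  \<open>j\<close> give \<open>j - 1\<close>, \<open>j + 1\<close> give \<open>j + 1\<close> and \<open>n - j\<close> give \<open>j + 2\<close>; the weight below is that count
  of insertions giving \<open>k\<close>, rewritten in the shape of the recurrence.\<close>

definition insertion_weight :: "nat \<Rightarrow> int \<Rightarrow> int \<Rightarrow> int" where
  "insertion_weight n k j = (int n + 1 - k) * (of_bool (j = k) + of_bool (j = k - 2))
     + k * (of_bool (j = k + 1) + of_bool (j = k - 1)) + of_bool (j = k + 1) + of_bool (j = k - 2)"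

lemma insertion_count:
  fixes d :: "nat \<Rightarrow> bool" and n :: nat and k :: int
  defines "j \<equiv> (\<Sum>p<n. of_bool (d p))"
  shows "(\<Sum>p<n. of_bool (j - of_bool (d p) = k) + of_bool (j - of_bool (d p) + 2 = k))
      + of_bool (j = k) + of_bool (j + 1 = k) = insertion_weight n k j"
proof -
  define c1 where "c1 = of_bool (k = j - 1) + (of_bool (k = j + 1) :: int)"
  define c0 where "c0 = of_bool (k = j) + (of_bool (k = j + 2) :: int)"
  have "of_bool (j - of_bool (d p) = k) + of_bool (j - of_bool (d p) + 2 = k)
      = of_bool (d p) * c1 + (1 - of_bool (d p)) * c0" for p
    by (cases "d p") (auto simp: c1_def c0_def)
  then have "(\<Sum>p<n. of_bool (j - of_bool (d p) = k) + of_bool (j - of_bool (d p) + 2 = k))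
      = (\<Sum>p<n. of_bool (d p) * c1 + (1 - of_bool (d p)) * c0)"
    by simp
  also have "\<dots> = j * c1 + (int n - j) * c0"
    unfolding sum.distrib sum_distrib_right[symmetric] sum_subtractf j_def by simp
  finally have sum_eq: "(\<Sum>p<n. of_bool (j - of_bool (d p) = k) + of_bool (j - of_bool (d p) + 2 = k))
      = j * c1 + (int n - j) * c0" .
  show ?thesis
    unfolding sum_eq insertion_weight_def c1_def c0_def
    by (cases "k = j"; cases "k = j + 2"; cases "k = j + 1"; cases "k = j - 1") (simp_all add: algebra_simps)
qed

lemma sum_insert_top_alt_des:
  assumes zs: "zs \<in> signed_lists n"
  shows "(\<Sum>(p, s)\<in>{..n} \<times> {1, -1}. of_bool (int (alt_des_list (insert_at p (s * (int n + 1)) zs)) = k))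
    = insertion_weight n k (int (alt_des_list zs))"
proof -
  define d where "d p = ((0 # zs)!p + zs!p < 0)" for p
  define j where "j = int (alt_des_list zs)"
  define t where "t = int n + 1"
  have l: "length zs = n"
    using zs by (simp add: signed_lists_def)
  have j: "j = (\<Sum>p<n. of_bool (d p))"
    using l by (simp add: j_def d_def alt_des_list_eq_sum)
  have dom: "\<forall>y\<in>set zs. \<bar>y\<bar> < \<bar>t\<bar>" "\<forall>y\<in>set zs. \<bar>y\<bar> < \<bar>-t\<bar>"
    using signed_lists_abs_bounds[OF zs] by (force simp: t_def)+
  have mid: "int (alt_des_list (insert_at p t zs)) = j - of_bool (d p)"
    "int (alt_des_list (insert_at p (-t) zs)) = j - of_bool (d p) + 2" if "p < n" for p
    using alt_des_list_insert_at_dominant[of p zs t] alt_des_list_insert_at_dominant[of p zs "-t"]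
      dom that l
    by (cases "d p"; simp add: j_def d_def t_def)+
  have last: "int (alt_des_list (insert_at n t zs)) = j" "int (alt_des_list (insert_at n (-t) zs)) = j + 1"
    using alt_des_list_append_dominant[of t zs] alt_des_list_append_dominant[of "-t" zs] dom l
    by (simp_all add: j_def t_def)
  have "(\<Sum>(p, s)\<in>{..n} \<times> {1, -1}. of_bool (int (alt_des_list (insert_at p (s * t) zs)) = k))
      = (\<Sum>p<Suc n. of_bool (int (alt_des_list (insert_at p t zs)) = k)
          + of_bool (int (alt_des_list (insert_at p (-t) zs)) = k))"
    by (simp add: sum.cartesian_product[symmetric] lessThan_Suc_atMost)
  also have "\<dots> = (\<Sum>p<n. of_bool (j - of_bool (d p) = k) + of_bool (j - of_bool (d p) + 2 = k))
      + of_bool (j = k) + of_bool (j + 1 = k)"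
    by (simp add: mid last)
  also have "\<dots> = insertion_weight n k j"
    unfolding j by (rule insertion_count)
  finally show ?thesis
    by (simp add: j_def t_def)
qed

lemma sum_alt_des_signed_lists_Suc:
  "(\<Sum>ys\<in>signed_lists (Suc n). of_bool (int (alt_des_list ys) = k))
    = (\<Sum>zs\<in>signed_lists n. insertion_weight n k (int (alt_des_list zs)))"
proof -
  have "(\<Sum>ys\<in>signed_lists (Suc n). of_bool (int (alt_des_list ys) = k))
      = (\<Sum>(zs, p, s)\<in>signed_lists n \<times> {..n} \<times> {1, -1}.
           of_bool (int (alt_des_list (insert_at p (s * (int n + 1)) zs)) = k))"
    by (subst sum.reindex_bij_betw[OF bij_betw_insert_top, symmetric]) (simp add: case_prod_beta)
  also have "\<dots> = (\<Sum>zs\<in>signed_lists n. \<Sum>(p, s)\<in>{..n} \<times> {1, -1}.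
           of_bool (int (alt_des_list (insert_at p (s * (int n + 1)) zs)) = k))"
    by (simp add: sum.cartesian_product case_prod_beta)
  also have "\<dots> = (\<Sum>zs\<in>signed_lists n. insertion_weight n k (int (alt_des_list zs)))"
    by (rule sum.cong) (simp_all add: sum_insert_top_alt_des)
  finally show ?thesis .
qed

section \<open>Twisted words of signed permutations\<close>

lemma signed_permsD:
  assumes "\<sigma> \<in> signed_perms n"
  shows "bij_betw \<sigma> ({- int n..int n} - {0}) ({- int n..int n} - {0})"
    and "\<sigma> (- i) = - \<sigma> i"
    and "i \<notin> {- int n..int n} \<Longrightarrow> \<sigma> i = i"
    and "\<sigma> 0 = 0"
  using assms unfolding signed_perms_def by (auto dest: spec[of _ 0])

definition twisted_word :: "nat \<Rightarrow> (int \<Rightarrow> int) \<Rightarrow> int list" where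
  "twisted_word n \<sigma> = map (\<lambda>i. (-1)^i * \<sigma> (int i)) [1..<Suc n]"

definition untwist :: "nat \<Rightarrow> int list \<Rightarrow> int \<Rightarrow> int" where
  "untwist n zs i =
     (if 1 \<le> \<bar>i\<bar> \<and> \<bar>i\<bar> \<le> int n then sgn i * (-1)^nat \<bar>i\<bar> * zs!(nat \<bar>i\<bar> - 1) else i)"

lemma length_twisted_word [simp]: "length (twisted_word n \<sigma>) = n"
  by (simp add: twisted_word_def)

lemma nth_twisted_word: "i < n \<Longrightarrow> twisted_word n \<sigma> ! i = (-1)^Suc i * \<sigma> (int (Suc i))"
  by (simp add: twisted_word_def del: upt_Suc)

lemma twisted_word_in_signed_lists:
  assumes \<sigma>: "\<sigma> \<in> signed_perms n"
  shows "twisted_word n \<sigma> \<in> signed_lists n"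
proof -
  have inj: "inj_on \<sigma> ({- int n..int n} - {0})" and into: "\<sigma> ` ({- int n..int n} - {0}) \<subseteq> {- int n..int n} - {0}"
    using signed_permsD(1)[OF \<sigma>] by (auto simp: bij_betw_def)
  have ma: "map abs (twisted_word n \<sigma>) = map (\<lambda>i. \<bar>\<sigma> (int i)\<bar>) [1..<Suc n]"
    by (simp add: twisted_word_def abs_mult)
  have "inj_on (\<lambda>i. \<bar>\<sigma> (int i)\<bar>) {1..n}"
  proof (rule inj_onI)
    fix i i' assume i: "i \<in> {1..n}" "i' \<in> {1..n}" "\<bar>\<sigma> (int i)\<bar> = \<bar>\<sigma> (int i')\<bar>"
    then have "\<sigma> (int i) = \<sigma> (int i') \<or> \<sigma> (int i) = \<sigma> (- int i')"
      using signed_permsD(2)[OF \<sigma>] by (auto simp: abs_eq_iff)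
    moreover have "int i \<in> {- int n..int n} - {0}" "int i' \<in> {- int n..int n} - {0}"
      "- int i' \<in> {- int n..int n} - {0}"
      using i by auto
    ultimately have "int i = int i' \<or> int i = - int i'"
      using inj_onD[OF inj] by metis
    then show "i = i'" using i by auto
  qed
  then have d: "distinct (map abs (twisted_word n \<sigma>))"
    unfolding ma distinct_map by (simp add: atLeastAtMost_upt del: upt_Suc)
  have "\<bar>\<sigma> (int i)\<bar> \<in> {1..int n}" if "i \<in> {1..n}" for i
    using into that by (force simp: abs_le_iff)
  then have sub: "set (map abs (twisted_word n \<sigma>)) \<subseteq> {1..int n}"
    unfolding ma by (auto simp del: upt_Suc)
  have "card (set (map abs (twisted_word n \<sigma>))) = card {1..int n}"
    using distinct_card[OF d] by simp
  then have "set (map abs (twisted_word n \<sigma>)) = {1..int n}"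
    using card_subset_eq[OF _ sub] by simp
  with d show ?thesis
    by (simp add: signed_lists_def)
qed

lemma untwist_twisted_word:
  assumes \<sigma>: "\<sigma> \<in> signed_perms n"
  shows "untwist n (twisted_word n \<sigma>) = \<sigma>"
proof
  fix i
  have pos: "untwist n (twisted_word n \<sigma>) (int m) = \<sigma> (int m)" if "1 \<le> m" "m \<le> n" for m
    using that nth_twisted_word[of "m - 1" n \<sigma>]
    by (simp add: untwist_def mult.assoc[symmetric] power_mult_distrib[symmetric])
  consider "i \<notin> {- int n..int n}" | "i = 0" | "1 \<le> i" "i \<le> int n" | "1 \<le> -i" "-i \<le> int n"
    by fastforce
  then show "untwist n (twisted_word n \<sigma>) i = \<sigma> i"
  proof cases
    case 1
    then have "\<not> \<bar>i\<bar> \<le> int n" by auto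
    then show ?thesis using signed_permsD(3)[OF \<sigma> 1] by (simp add: untwist_def)
  next
    case 2
    then show ?thesis using signed_permsD(4)[OF \<sigma>] by (simp add: untwist_def)
  next
    case 3
    then show ?thesis using pos[of "nat i"] by simp
  next
    case 4
    then have "untwist n (twisted_word n \<sigma>) i = - untwist n (twisted_word n \<sigma>) (- i)"
      by (simp add: untwist_def)
    then show ?thesis using pos[of "nat (- i)"] signed_permsD(2)[OF \<sigma>, of i] 4 by simp
  qed
qed

lemma untwist_uminus: "untwist n zs (- i) = - untwist n zs i"
  by (simp add: untwist_def)

lemma abs_untwist:
  "1 \<le> \<bar>i\<bar> \<Longrightarrow> \<bar>i\<bar> \<le> int n \<Longrightarrow> \<bar>untwist n zs i\<bar> = \<bar>zs!(nat \<bar>i\<bar> - 1)\<bar>"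
  by (auto simp: untwist_def abs_mult abs_sgn_eq)

lemma untwist_in_signed_perms:
  assumes zs: "zs \<in> signed_lists n"
  shows "untwist n zs \<in> signed_perms n"
proof -
  define A where "A = {- int n..int n} - {0}"
  have l: "length zs = n" and d: "distinct (map abs zs)"
    using zs by (auto simp: signed_lists_def)
  have i_A: "1 \<le> \<bar>i\<bar>" "\<bar>i\<bar> \<le> int n" "nat \<bar>i\<bar> - 1 < n" if "i \<in> A" for i
    using that by (auto simp: A_def)
  have maps_to: "untwist n zs i \<in> A" if "i \<in> A" for i
  proof -
    have "zs!(nat \<bar>i\<bar> - 1) \<in> set zs"
      using i_A[OF that] l by simp
    then have "1 \<le> \<bar>untwist n zs i\<bar> \<and> \<bar>untwist n zs i\<bar> \<le> int n"
      using abs_untwist[where zs = zs, OF i_A(1,2)[OF that]] signed_lists_abs_bounds[OF zs] by simp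
    then show ?thesis
      by (auto simp: A_def abs_le_iff)
  qed
  have "inj_on (untwist n zs) A"
  proof (rule inj_onI)
    fix i j assume i: "i \<in> A" and j: "j \<in> A" and eq: "untwist n zs i = untwist n zs j"
    then have "map abs zs ! (nat \<bar>i\<bar> - 1) = map abs zs ! (nat \<bar>j\<bar> - 1)"
      using abs_untwist[where zs = zs, OF i_A(1,2)[OF i]] abs_untwist[where zs = zs, OF i_A(1,2)[OF j]] i_A(3)[OF i] i_A(3)[OF j] l
      by simp
    then have "nat \<bar>i\<bar> - 1 = nat \<bar>j\<bar> - 1"
      using nth_eq_iff_index_eq[OF d] i_A(3)[OF i] i_A(3)[OF j] l by simp
    then have "j = i \<or> j = - i"
      using i_A(1)[OF i] i_A(1)[OF j] by (auto simp: abs_eq_iff)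
    moreover have "untwist n zs i \<noteq> 0"
      using maps_to[OF i] by (simp add: A_def)
    ultimately show "i = j"
      using eq untwist_uminus[of n zs i] by auto
  qed
  moreover have "untwist n zs ` A \<subseteq> A"
    using maps_to by blast
  ultimately have "bij_betw (untwist n zs) A A"
    by (simp add: bij_betw_def endo_inj_surj A_def)
  moreover have "untwist n zs i = i" if "i \<notin> {- int n..int n}" for i
    using that by (auto simp: untwist_def)
  ultimately show ?thesis
    using untwist_uminus by (simp add: signed_perms_def A_def)
qed

lemma twisted_word_untwist:
  assumes "length zs = n"
  shows "twisted_word n (untwist n zs) = zs"
proof (rule nth_equalityI)
  fix i assume "i < length (twisted_word n (untwist n zs))"
  then have "i < n" by simp
  then show "twisted_word n (untwist n zs) ! i = zs ! i"
    by (simp add: nth_twisted_word untwist_def mult.assoc[symmetric] power_mult_distrib[symmetric]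
        nat_add_distrib)
qed (use assms in simp)

lemma bij_betw_twisted_word: "bij_betw (twisted_word n) (signed_perms n) (signed_lists n)"
proof (rule bij_betw_byWitness[where f' = "untwist n"])
  show "\<forall>\<sigma>\<in>signed_perms n. untwist n (twisted_word n \<sigma>) = \<sigma>"
    by (simp add: untwist_twisted_word)
  show "\<forall>zs\<in>signed_lists n. twisted_word n (untwist n zs) = zs"
    by (simp add: twisted_word_untwist signed_lists_def)
  show "twisted_word n ` signed_perms n \<subseteq> signed_lists n"
    using twisted_word_in_signed_lists by blast
  show "untwist n ` signed_lists n \<subseteq> signed_perms n"
    using untwist_in_signed_perms by blast
qed

lemma alt_des_list_twisted_word:
  assumes \<sigma>: "\<sigma> \<in> signed_perms n"
  shows "alt_des_list (twisted_word n \<sigma>) = alt_des_B n \<sigma>"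
proof -
  have z: "0 # twisted_word n \<sigma> = map (\<lambda>i. (-1)^i * \<sigma> (int i)) [0..<Suc n]"
    using signed_permsD(4)[OF \<sigma>] by (simp add: twisted_word_def upt_conv_Cons del: upt_Suc)
  have step: "(-1)^i * \<sigma> (int i) + (-1)^Suc i * \<sigma> (int (Suc i)) < 0 \<longleftrightarrow> is_alt_des \<sigma> i" for i
    by (cases "even i") (auto simp: is_alt_des_def add.commute)
  have "alt_des_list (twisted_word n \<sigma>)
      = (\<Sum>i<n. of_bool ((-1)^i * \<sigma> (int i) + (-1)^Suc i * \<sigma> (int (Suc i)) < 0))"
    unfolding alt_des_list_def neg_pairs_eq_sum z
    by (intro sum.cong) (auto simp del: upt_Suc simp: nth_append)
  also have "\<dots> = (\<Sum>i<n. of_bool (is_alt_des \<sigma> i))"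
    by (simp only: step)
  also have "\<dots> = card {i \<in> {0..<n}. is_alt_des \<sigma> i}"
    by (simp add: lessThan_atLeast0 Int_def)
  finally show ?thesis
    by (simp add: alt_des_B_def)
qed

lemma Bhat_eq_sum_signed_lists: "Bhat n k = (\<Sum>zs\<in>signed_lists n. of_bool (int (alt_des_list zs) = k))"
proof -
  have "finite (signed_perms n)"
    using bij_betw_finite[OF bij_betw_twisted_word] finite_signed_lists by blast
  then have "Bhat n k = (\<Sum>\<sigma>\<in>signed_perms n. of_bool (int (alt_des_B n \<sigma>) = k))"
    by (simp add: Bhat_def Int_def)
  also have "\<dots> = (\<Sum>\<sigma>\<in>signed_perms n. of_bool (int (alt_des_list (twisted_word n \<sigma>)) = k))"
    by (rule sum.cong) (simp_all add: alt_des_list_twisted_word)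
  also have "\<dots> = (\<Sum>zs\<in>signed_lists n. of_bool (int (alt_des_list zs) = k))"
    by (rule sum.reindex_bij_betw[OF bij_betw_twisted_word])
  finally show ?thesis .
qed

lemma Bhat_Suc:
  "Bhat (Suc n) k = (int n + 1 - k) * (Bhat n k + Bhat n (k - 2))
     + k * (Bhat n (k + 1) + Bhat n (k - 1)) + Bhat n (k + 1) + Bhat n (k - 2)"
  unfolding Bhat_eq_sum_signed_lists sum_alt_des_signed_lists_Suc insertion_weight_def
  unfolding distrib_left sum_distrib_left sum.distrib by (simp add: eq_commute)

section \<open>Snakes\<close>

definition negate_perm :: "nat \<Rightarrow> (int \<Rightarrow> int) \<Rightarrow> int \<Rightarrow> int" where
  "negate_perm n \<sigma> i = (if i \<in> {- int n..int n} then - \<sigma> i else i)"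

lemma negate_perm_in_signed_perms:
  assumes \<sigma>: "\<sigma> \<in> signed_perms n"
  shows "negate_perm n \<sigma> \<in> signed_perms n"
proof -
  define A where "A = {- int n..int n} - {0}"
  have "bij_betw uminus A A"
    by (rule bij_betw_byWitness[where f' = uminus]) (auto simp: A_def)
  then have "bij_betw (uminus \<circ> \<sigma>) A A"
    using signed_permsD(1)[OF \<sigma>] bij_betw_trans unfolding A_def by blast
  then have "bij_betw (negate_perm n \<sigma>) A A"
    by (rule bij_betw_cong[THEN iffD1, rotated]) (simp add: A_def negate_perm_def)
  moreover have "negate_perm n \<sigma> (- i) = - negate_perm n \<sigma> i" for i
    using signed_permsD(2)[OF \<sigma>, of i] by (auto simp: negate_perm_def)
  ultimately show ?thesis
    by (simp add: signed_perms_def A_def negate_perm_def)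
qed

lemma negate_perm_negate_perm: "\<sigma> \<in> signed_perms n \<Longrightarrow> negate_perm n (negate_perm n \<sigma>) = \<sigma>"
  by (auto simp: negate_perm_def signed_permsD(3))

lemma signed_perms_adjacent_ne:
  assumes \<sigma>: "\<sigma> \<in> signed_perms n" and "i < n"
  shows "\<sigma> (int i) \<noteq> \<sigma> (int i + 1)"
proof
  assume eq: "\<sigma> (int i) = \<sigma> (int i + 1)"
  have bij: "bij_betw \<sigma> ({- int n..int n} - {0}) ({- int n..int n} - {0})"
    by (rule signed_permsD(1)[OF \<sigma>])
  have "int i + 1 \<in> {- int n..int n} - {0}"
    using assms(2) by auto
  then have "\<sigma> (int i + 1) \<noteq> 0"
    using bij_betwE[OF bij] by blast
  then have "i \<noteq> 0"
    using eq signed_permsD(4)[OF \<sigma>] by (cases "i = 0") auto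
  then have "int i \<in> {- int n..int n} - {0}"
    using assms(2) by auto
  then have "int i = int i + 1"
    using inj_onD[OF bij_betw_imp_inj_on[OF bij] eq] \<open>int i + 1 \<in> _\<close> by blast
  then show False by simp
qed

lemma negate_perm_in_snakes_iff:
  assumes \<sigma>: "\<sigma> \<in> signed_perms n" and "n \<ge> 1"
  shows "negate_perm n \<sigma> \<in> snakes n \<longleftrightarrow>
    (\<forall>i<n. if even i then \<sigma> (int i + 1) < \<sigma> (int i) else \<sigma> (int i) < \<sigma> (int i + 1))"
    (is "_ \<longleftrightarrow> (\<forall>i<n. ?P i)")
proof -
  let ?\<tau> = "negate_perm n \<sigma>"
  let ?Q = "\<lambda>i. (odd i \<longrightarrow> ?\<tau> (int i) > ?\<tau> (int i + 1)) \<and> (even i \<longrightarrow> ?\<tau> (int i) < ?\<tau> (int i + 1))"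
  have neg: "?\<tau> (int i) = - \<sigma> (int i)" "?\<tau> (int i + 1) = - \<sigma> (int i + 1)" if "i < n" for i
    using that by (simp_all add: negate_perm_def)
  have snake: "?\<tau> \<in> snakes n \<longleftrightarrow> ?\<tau> 1 > 0 \<and> (\<forall>i. 1 \<le> i \<and> i < n \<longrightarrow> ?Q i)"
    using negate_perm_in_signed_perms[OF \<sigma>] by (simp add: snakes_def)
  have first: "?\<tau> 1 > 0 \<longleftrightarrow> ?P 0"
    using neg[of 0] assms(2) signed_permsD(4)[OF \<sigma>] by simp
  have step: "?Q i \<longleftrightarrow> ?P i" if "i < n" for i
    using neg[OF that] by auto
  have split: "(\<forall>i<n. R i) \<longleftrightarrow> R 0 \<and> (\<forall>i. 1 \<le> i \<and> i < n \<longrightarrow> R i)" for R :: "nat \<Rightarrow> bool"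
    using assms(2) by (auto simp: Suc_le_eq) (metis gr0I)
  show ?thesis
    unfolding snake first split using step by blast
qed

lemma alt_des_B_eq_0_iff:
  assumes "\<sigma> \<in> signed_perms n"
  shows "alt_des_B n \<sigma> = 0 \<longleftrightarrow>
    (\<forall>i<n. if even i then \<sigma> (int i + 1) < \<sigma> (int i) else \<sigma> (int i) < \<sigma> (int i + 1))"
proof -
  have "\<not> is_alt_des \<sigma> i \<longleftrightarrow>
      (if even i then \<sigma> (int i + 1) < \<sigma> (int i) else \<sigma> (int i) < \<sigma> (int i + 1))" if "i < n" for i
    using signed_perms_adjacent_ne[OF assms that] by (auto simp: is_alt_des_def)
  moreover have "alt_des_B n \<sigma> = 0 \<longleftrightarrow> (\<forall>i<n. \<not> is_alt_des \<sigma> i)"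
    by (auto simp: alt_des_B_def)
  ultimately show ?thesis
    by simp
qed

lemma Bhat_0:
  assumes "n \<ge> 1"
  shows "Bhat n 0 = S_num n"
proof -
  have zero_iff_snake: "alt_des_B n \<sigma> = 0 \<longleftrightarrow> negate_perm n \<sigma> \<in> snakes n" if "\<sigma> \<in> signed_perms n" for \<sigma>
    using alt_des_B_eq_0_iff[OF that] negate_perm_in_snakes_iff[OF that assms] by simp
  have "bij_betw (negate_perm n) {\<sigma> \<in> signed_perms n. int (alt_des_B n \<sigma>) = 0} (snakes n)"
  proof (rule bij_betw_byWitness[where f' = "negate_perm n"])
    show "\<forall>\<sigma>\<in>{\<sigma> \<in> signed_perms n. int (alt_des_B n \<sigma>) = 0}. negate_perm n (negate_perm n \<sigma>) = \<sigma>"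
      "\<forall>\<tau>\<in>snakes n. negate_perm n (negate_perm n \<tau>) = \<tau>"
      by (auto simp: negate_perm_negate_perm snakes_def)
    show "negate_perm n ` {\<sigma> \<in> signed_perms n. int (alt_des_B n \<sigma>) = 0} \<subseteq> snakes n"
      using zero_iff_snake by auto
    show "negate_perm n ` snakes n \<subseteq> {\<sigma> \<in> signed_perms n. int (alt_des_B n \<sigma>) = 0}"
      using zero_iff_snake negate_perm_in_signed_perms negate_perm_negate_perm
      by (fastforce simp: snakes_def)
  qed
  then show ?thesis
    unfolding Bhat_def S_num_def by (simp add: bij_betw_same_card)
qed

theorem proposition3p2:
  shows "(\<forall>n::nat. n \<ge> 1 \<longrightarrow> Bhat n 0 = S_num n) \<and>
    (\<forall>n::nat. \<forall>k::int. n \<ge> 1 \<longrightarrow>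
       Bhat (n + 1) k =
         (int n + 1 - k) * (Bhat n k + Bhat n (k - 2))
         + k * (Bhat n (k + 1) + Bhat n (k - 1))
         + Bhat n (k + 1) + Bhat n (k - 2))"
  using Bhat_0 Bhat_Suc by simp

end
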